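(* Every chandelier is a restricted frame graph.
   Context: A chandelier is a graph obtained from a tree $T$ by adding a new vertex adjacent to every leaf of $T$. A frame is the boundary of an axis-parallel box $I\times J\subset\mathbb R^2$. A graph $G$ is a restricted frame graph if there is a family of frames $\{F_v : v\in V(G)\}$ with $uv\in E(G)$ iff $F_u\cap F_v\neq\emptyset$, satisfying: (1) corners of a frame do not coincide with any point of another frame; (2) the left side of any frame does not intersect any other frame; (3) if the right side of a frame intersects a second frame, this right side intersects both the top and the bottom side of the second frame; (4) if two frames have non-empty intersection, then no frame is entirely contained in the intersection of the two regions bounded by these two frames. *)

theory Defs
  imports Complex_Main
begin

definition simple_graph :: "'a set \<Rightarrow> ('a \<Rightarrow> 'a \<Rightarrow> bool) \<Rightarrow> bool" where
  "simple_graph V adj \<longleftrightarrow> finite V \<and> (\<forall>u v. adj u v \<longrightarrow> adj v u) \<and> (\<forall>v. \<not> adj v v)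
     \<and> (\<forall>u v. adj u v \<longrightarrow> u \<in> V \<and> v \<in> V)"

definition connected_on :: "'a set \<Rightarrow> ('a \<Rightarrow> 'a \<Rightarrow> bool) \<Rightarrow> bool" where
  "connected_on T adj \<longleftrightarrow>
     (\<forall>u\<in>T. \<forall>v\<in>T. (u, v) \<in> {(x, y). x \<in> T \<and> y \<in> T \<and> adj x y}\<^sup>*)"

definition acyclic_on :: "'a set \<Rightarrow> ('a \<Rightarrow> 'a \<Rightarrow> bool) \<Rightarrow> bool" where
  "acyclic_on T adj \<longleftrightarrow>
     \<not> (\<exists>cs. length cs \<ge> 3 \<and> distinct cs \<and> set cs \<subseteq> T
            \<and> (\<forall>i. i + 1 < length cs \<longrightarrow> adj (cs ! i) (cs ! (i + 1)))
            \<and> adj (last cs) (hd cs))"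

definition is_tree :: "'a set \<Rightarrow> ('a \<Rightarrow> 'a \<Rightarrow> bool) \<Rightarrow> bool" where
  "is_tree T adj \<longleftrightarrow> finite T \<and> T \<noteq> {} \<and> connected_on T adj \<and> acyclic_on T adj"

definition is_leaf :: "'a set \<Rightarrow> ('a \<Rightarrow> 'a \<Rightarrow> bool) \<Rightarrow> 'a \<Rightarrow> bool" where
  "is_leaf T adj v \<longleftrightarrow> v \<in> T \<and> card {u \<in> T. adj v u} = 1"

definition chandelier :: "'a set \<Rightarrow> ('a \<Rightarrow> 'a \<Rightarrow> bool) \<Rightarrow> bool" where
  "chandelier V adj \<longleftrightarrow> simple_graph V adj \<and>
     (\<exists>T r. r \<notin> T \<and> V = insert r T \<and> is_tree T adj
            \<and> (\<forall>v\<in>T. adj r v \<longleftrightarrow> is_leaf T adj v))"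

text \<open>A box is encoded as (x1, x2, y1, y2), standing for [x1,x2] \<times> [y1,y2]
with x1 < x2 and y1 < y2.\<close>

type_synonym box = "real \<times> real \<times> real \<times> real"

fun valid_box :: "box \<Rightarrow> bool" where
  "valid_box (x1, x2, y1, y2) \<longleftrightarrow> x1 < x2 \<and> y1 < y2"

fun region :: "box \<Rightarrow> (real \<times> real) set" where
  "region (x1, x2, y1, y2) = {x1..x2} \<times> {y1..y2}"

fun left_side :: "box \<Rightarrow> (real \<times> real) set" where
  "left_side (x1, x2, y1, y2) = {x1} \<times> {y1..y2}"

fun right_side :: "box \<Rightarrow> (real \<times> real) set" where
  "right_side (x1, x2, y1, y2) = {x2} \<times> {y1..y2}"

fun bottom_side :: "box \<Rightarrow> (real \<times> real) set" where
  "bottom_side (x1, x2, y1, y2) = {x1..x2} \<times> {y1}"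

fun top_side :: "box \<Rightarrow> (real \<times> real) set" where
  "top_side (x1, x2, y1, y2) = {x1..x2} \<times> {y2}"

definition frame :: "box \<Rightarrow> (real \<times> real) set" where
  "frame B = left_side B \<union> right_side B \<union> bottom_side B \<union> top_side B"

fun corners :: "box \<Rightarrow> (real \<times> real) set" where
  "corners (x1, x2, y1, y2) = {(x1, y1), (x1, y2), (x2, y1), (x2, y2)}"

definition restricted_frame_rep ::
  "'a set \<Rightarrow> ('a \<Rightarrow> 'a \<Rightarrow> bool) \<Rightarrow> ('a \<Rightarrow> box) \<Rightarrow> bool" where
  "restricted_frame_rep V adj F \<longleftrightarrow>
     (\<forall>v\<in>V. valid_box (F v))
   \<and> (\<forall>u\<in>V. \<forall>v\<in>V. u \<noteq> v \<longrightarrow> (adj u v \<longleftrightarrow> frame (F u) \<inter> frame (F v) \<noteq> {}))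
   \<comment> \<open>(1) corners of a frame avoid every other frame\<close>
   \<and> (\<forall>u\<in>V. \<forall>v\<in>V. u \<noteq> v \<longrightarrow> corners (F u) \<inter> frame (F v) = {})
   \<comment> \<open>(2) the left side of a frame avoids every other frame\<close>
   \<and> (\<forall>u\<in>V. \<forall>v\<in>V. u \<noteq> v \<longrightarrow> left_side (F u) \<inter> frame (F v) = {})
   \<comment> \<open>(3) a right side meeting another frame meets its top and bottom sides\<close>
   \<and> (\<forall>u\<in>V. \<forall>v\<in>V. u \<noteq> v \<longrightarrow> right_side (F u) \<inter> frame (F v) \<noteq> {} \<longrightarrow>
        right_side (F u) \<inter> top_side (F v) \<noteq> {} \<and> right_side (F u) \<inter> bottom_side (F v) \<noteq> {})
   \<comment> \<open>(4) no frame lies inside the intersection of the regions of two intersecting frames\<close>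
   \<and> (\<forall>u\<in>V. \<forall>v\<in>V. u \<noteq> v \<longrightarrow> frame (F u) \<inter> frame (F v) \<noteq> {} \<longrightarrow>
        (\<forall>w\<in>V. \<not> frame (F w) \<subseteq> region (F u) \<inter> region (F v)))"

definition restricted_frame_graph :: "'a set \<Rightarrow> ('a \<Rightarrow> 'a \<Rightarrow> bool) \<Rightarrow> bool" where
  "restricted_frame_graph V adj \<longleftrightarrow> (\<exists>F. restricted_frame_rep V adj F)"

end

theory Submission
  imports Defs
begin

text \<open>Root the tree T at a vertex that is not a leaf and assign to every vertex v an interval
[lo v, hi v] of [0, 1], the intervals of the children of v being pairwise disjoint and strictly
inside that of v. The frame of v spans this interval vertically and starts at x = depth v; an inner
vertex ends at x = depth v + 3/2, so its right side pierces exactly the frames of its children,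
while a leaf reaches beyond x = max depth + 3. The new vertex gets a large box with right side at
x = max depth + 3: it contains the frames of the inner vertices and its right side pierces exactly
the frames of the leaves. Frames of non-adjacent vertices are separated vertically by disjoint
intervals or horizontally by a depth difference of at least 2. If every vertex of T is a leaf, T
is a single edge and the chandelier is a triangle, which is drawn by hand.\<close>

section \<open>Piercing frames\<close>

text \<open>The right side of A crosses B from bottom to top; no other parts of the two frames meet.\<close>

fun pierces :: "box \<Rightarrow> box \<Rightarrow> bool" where
  "pierces (a1, a2, b1, b2) (c1, c2, d1, d2) \<longleftrightarrow>
     a1 < c1 \<and> c1 < a2 \<and> a2 < c2 \<and> b1 < d1 \<and> d1 < d2 \<and> d2 < b2"

lemma pierces_frames:
  assumes "pierces A B"
  shows frame_inter_pierces: "frame A \<inter> frame B \<noteq> {}"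
    and corners_pierces: "corners A \<inter> frame B = {}" "corners B \<inter> frame A = {}"
    and left_side_pierces: "left_side A \<inter> frame B = {}" "left_side B \<inter> frame A = {}"
    and right_side_pierces: "right_side A \<inter> top_side B \<noteq> {}" "right_side A \<inter> bottom_side B \<noteq> {}"
    and right_side_pierced: "right_side B \<inter> frame A = {}"
proof -
  obtain a1 a2 b1 b2 c1 c2 d1 d2 where A: "A = (a1, a2, b1, b2)" and B: "B = (c1, c2, d1, d2)"
    by (cases A, cases B) auto
  have ineq: "a1 < c1" "c1 < a2" "a2 < c2" "b1 < d1" "d1 < d2" "d2 < b2"
    using assms unfolding A B by auto
  have "(a2, d2) \<in> right_side A \<inter> top_side B" "(a2, d1) \<in> right_side A \<inter> bottom_side B"
    using ineq unfolding A B by auto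
  then show "right_side A \<inter> top_side B \<noteq> {}" "right_side A \<inter> bottom_side B \<noteq> {}"
    and "frame A \<inter> frame B \<noteq> {}"
    unfolding frame_def by blast+
  show "corners A \<inter> frame B = {}" "corners B \<inter> frame A = {}"
    "left_side A \<inter> frame B = {}" "left_side B \<inter> frame A = {}" "right_side B \<inter> frame A = {}"
    using ineq unfolding A B frame_def by auto
qed

lemma frame_subset_region: "valid_box A \<Longrightarrow> frame A \<subseteq> region A"
  by (cases A) (auto simp: frame_def)

lemma corners_subset_frame: "valid_box A \<Longrightarrow> corners A \<subseteq> frame A"
  by (cases A) (auto simp: frame_def)

lemma frames_disjoint_if_regions_disjoint:
  "valid_box A \<Longrightarrow> valid_box B \<Longrightarrow> region A \<inter> region B = {} \<Longrightarrow> frame A \<inter> frame B = {}"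
  using frame_subset_region by blast

lemma regions_disjoint:
  "a2 < c1 \<or> c2 < a1 \<or> b2 < d1 \<or> d2 < b1 \<Longrightarrow> region (a1, a2, b1, b2) \<inter> region (c1, c2, d1, d2) = {}"
  by auto

lemma frames_disjoint_if_nested:
  "a1 < c1 \<Longrightarrow> c2 < a2 \<Longrightarrow> b1 < d1 \<Longrightarrow> d2 < b2 \<Longrightarrow> c1 \<le> c2 \<Longrightarrow> d1 \<le> d2 \<Longrightarrow>
   frame (a1, a2, b1, b2) \<inter> frame (c1, c2, d1, d2) = {}"
  by (auto simp: frame_def)

lemma region_subset_if_frame_subset:
  assumes "valid_box W" "frame W \<subseteq> region A"
  shows "region W \<subseteq> region A"
proof -
  obtain e1 e2 f1 f2 where W: "W = (e1, e2, f1, f2)"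
    by (cases W) auto
  obtain a1 a2 b1 b2 where A: "A = (a1, a2, b1, b2)"
    by (cases A) auto
  have "(e1, f1) \<in> frame W" "(e2, f2) \<in> frame W"
    using assms(1) unfolding W by (auto simp: frame_def)
  then have "(e1, f1) \<in> region A" "(e2, f2) \<in> region A"
    using assms(2) by blast+
  then show ?thesis
    unfolding W A by auto
qed

lemma restricted_frame_repI:
  assumes valid: "\<And>v. v \<in> V \<Longrightarrow> valid_box (F v)"
    and adjacent: "\<And>u v. u \<in> V \<Longrightarrow> v \<in> V \<Longrightarrow> u \<noteq> v \<Longrightarrow> adj u v \<Longrightarrow>
      pierces (F u) (F v) \<or> pierces (F v) (F u)"
    and non_adjacent: "\<And>u v. u \<in> V \<Longrightarrow> v \<in> V \<Longrightarrow> u \<noteq> v \<Longrightarrow> \<not> adj u v \<Longrightarrow>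
      frame (F u) \<inter> frame (F v) = {}"
    and not_inside: "\<And>u v w. u \<in> V \<Longrightarrow> v \<in> V \<Longrightarrow> w \<in> V \<Longrightarrow> u \<noteq> v \<Longrightarrow> adj u v \<Longrightarrow>
      \<not> frame (F w) \<subseteq> region (F u) \<inter> region (F v)"
  shows "restricted_frame_rep V adj F"
  unfolding restricted_frame_rep_def
proof (intro conjI ballI impI)
  fix u v assume uv: "u \<in> V" "v \<in> V" "u \<noteq> v"
  have cases: "adj u v \<and> (pierces (F u) (F v) \<or> pierces (F v) (F u))
      \<or> \<not> adj u v \<and> frame (F u) \<inter> frame (F v) = {}"
    using adjacent[OF uv] non_adjacent[OF uv] by blast
  then show "adj u v \<longleftrightarrow> frame (F u) \<inter> frame (F v) \<noteq> {}"
    using frame_inter_pierces[of "F u" "F v"] frame_inter_pierces[of "F v" "F u"] by blast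
  show "corners (F u) \<inter> frame (F v) = {}"
    using cases corners_pierces[of "F u" "F v"] corners_pierces[of "F v" "F u"]
      corners_subset_frame[OF valid[OF uv(1)]] by blast
  show "left_side (F u) \<inter> frame (F v) = {}"
    using cases left_side_pierces[of "F u" "F v"] left_side_pierces[of "F v" "F u"]
    unfolding frame_def by blast
  assume "right_side (F u) \<inter> frame (F v) \<noteq> {}"
  then have "pierces (F u) (F v)"
    using cases right_side_pierced[of "F v" "F u"] unfolding frame_def by blast
  then show "right_side (F u) \<inter> top_side (F v) \<noteq> {}" "right_side (F u) \<inter> bottom_side (F v) \<noteq> {}"
    by (rule right_side_pierces)+
next
  fix u v w assume "u \<in> V" "v \<in> V" "u \<noteq> v" "frame (F u) \<inter> frame (F v) \<noteq> {}" "w \<in> V"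
  then show "\<not> frame (F w) \<subseteq> region (F u) \<inter> region (F v)"
    using not_inside non_adjacent by blast
qed (use valid in blast)

section \<open>Rooted trees\<close>

locale rooted_tree =
  fixes T :: "'a set" and adj :: "'a \<Rightarrow> 'a \<Rightarrow> bool" and root :: 'a
  assumes adj_sym: "\<And>u v. adj u v \<Longrightarrow> adj v u"
    and adj_irrefl: "\<And>v. \<not> adj v v"
    and connected: "connected_on T adj"
    and acyclic: "acyclic_on T adj"
    and finite_T: "finite T"
    and root_in_T: "root \<in> T"
begin

definition edges :: "('a \<times> 'a) set" where
  "edges = {(x, y). x \<in> T \<and> y \<in> T \<and> adj x y}"

definition depth :: "'a \<Rightarrow> nat" where
  "depth v = (LEAST n. (root, v) \<in> edges ^^ n)"

definition parent :: "'a \<Rightarrow> 'a" where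
  "parent v = (SOME u. u \<in> T \<and> adj u v \<and> Suc (depth u) = depth v)"

lemma walk_of_depth: "v \<in> T \<Longrightarrow> (root, v) \<in> edges ^^ depth v"
proof -
  assume "v \<in> T"
  then have "(root, v) \<in> edges\<^sup>*"
    using connected root_in_T unfolding connected_on_def edges_def by blast
  then show ?thesis
    unfolding depth_def by (rule LeastI_ex[OF rtrancl_imp_relpow])
qed

lemma depth_le: "(root, v) \<in> edges ^^ n \<Longrightarrow> depth v \<le> n"
  unfolding depth_def by (rule Least_le)

lemma depth_root [simp]: "depth root = 0"
  using depth_le[of root 0] by simp

lemma depth_eq_0_iff: "v \<in> T \<Longrightarrow> depth v = 0 \<longleftrightarrow> v = root"
  using walk_of_depth[of v] by auto

lemma depth_adj_le: "u \<in> T \<Longrightarrow> v \<in> T \<Longrightarrow> adj u v \<Longrightarrow> depth v \<le> Suc (depth u)"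
  by (rule depth_le, rule relpow_Suc_I[OF walk_of_depth]) (auto simp: edges_def)

lemma parent_exists:
  assumes v: "v \<in> T" "v \<noteq> root"
  shows "\<exists>u. u \<in> T \<and> adj u v \<and> Suc (depth u) = depth v"
proof -
  obtain n where n: "depth v = Suc n"
    using depth_eq_0_iff[OF v(1)] v(2) by (cases "depth v") auto
  then obtain u where "(root, u) \<in> edges ^^ n" "(u, v) \<in> edges"
    using walk_of_depth[OF v(1)] by (auto elim: relpow_Suc_E)
  then have "u \<in> T" "adj u v" "depth u \<le> n"
    by (auto simp: edges_def intro: depth_le)
  moreover have "depth v \<le> Suc (depth u)"
    using depth_adj_le \<open>u \<in> T\<close> \<open>adj u v\<close> v(1) by blast
  ultimately show ?thesis
    using n by auto
qed

lemma
  assumes "v \<in> T" "v \<noteq> root"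
  shows parent_in_T: "parent v \<in> T"
    and adj_parent: "adj (parent v) v"
    and depth_parent: "Suc (depth (parent v)) = depth v"
  using someI_ex[OF parent_exists[OF assms]] unfolding parent_def by auto

lemma
  assumes "v \<in> T" "i \<le> depth v"
  shows ancestor_in_T: "(parent ^^ i) v \<in> T"
    and depth_ancestor: "depth ((parent ^^ i) v) = depth v - i"
proof -
  have "(parent ^^ i) v \<in> T \<and> depth ((parent ^^ i) v) = depth v - i"
    using assms(2)
  proof (induction i)
    case (Suc i)
    then have "(parent ^^ i) v \<in> T" "(parent ^^ i) v \<noteq> root" "depth ((parent ^^ i) v) = depth v - i"
      by auto
    then show ?case
      using parent_in_T depth_parent by fastforce
  qed (use assms(1) in simp)
  then show "(parent ^^ i) v \<in> T" "depth ((parent ^^ i) v) = depth v - i"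
    by auto
qed

lemma ancestor_depth_0: "v \<in> T \<Longrightarrow> (parent ^^ depth v) v = root"
  by (metis ancestor_in_T depth_ancestor depth_eq_0_iff diff_self_eq_0 order_refl)

lemma adj_ancestor_Suc:
  assumes "v \<in> T" "i < depth v"
  shows "adj ((parent ^^ i) v) ((parent ^^ Suc i) v)"
proof -
  have "(parent ^^ i) v \<in> T" "depth ((parent ^^ i) v) \<noteq> 0"
    using assms ancestor_in_T depth_ancestor by auto
  then have "(parent ^^ i) v \<in> T" "(parent ^^ i) v \<noteq> root"
    by auto
  then show ?thesis
    using adj_parent adj_sym by simp
qed

definition ancestor_walk :: "'a \<Rightarrow> nat \<Rightarrow> 'a list" where
  "ancestor_walk v k = map (\<lambda>i. (parent ^^ i) v) [0..<Suc k]"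

lemma
  assumes "v \<in> T" "k \<le> depth v"
  shows successively_ancestor_walk: "successively adj (ancestor_walk v k)"
    and distinct_ancestor_walk: "distinct (ancestor_walk v k)"
    and set_ancestor_walk: "set (ancestor_walk v k) = {(parent ^^ i) v | i. i \<le> k}"
proof -
  show "successively adj (ancestor_walk v k)"
    unfolding ancestor_walk_def successively_conv_nth
    using assms adj_ancestor_Suc by (auto simp del: upt_Suc funpow.simps)
  have "inj_on (\<lambda>i. (parent ^^ i) v) {0..<Suc k}"
  proof (rule inj_onI)
    fix i j assume "i \<in> {0..<Suc k}" "j \<in> {0..<Suc k}" "(parent ^^ i) v = (parent ^^ j) v"
    then have "depth v - i = depth v - j" "i \<le> depth v" "j \<le> depth v"
      using depth_ancestor[OF assms(1), of i] depth_ancestor[OF assms(1), of j] assms(2) by auto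
    then show "i = j"
      by linarith
  qed
  then show "distinct (ancestor_walk v k)"
    unfolding ancestor_walk_def by (simp add: distinct_map del: upt_Suc)
  show "set (ancestor_walk v k) = {(parent ^^ i) v | i. i \<le> k}"
    unfolding ancestor_walk_def by (auto simp del: upt_Suc)
qed

lemma ancestor_walk_simps [simp]:
  "ancestor_walk v k \<noteq> []"
  "length (ancestor_walk v k) = Suc k"
  "hd (ancestor_walk v k) = v"
  "last (ancestor_walk v k) = (parent ^^ k) v"
  by (simp_all add: ancestor_walk_def hd_map last_map del: upt_Suc)

lemma successively_adj_rev [simp]: "successively adj (rev xs) \<longleftrightarrow> successively adj xs"
proof -
  have sym_eq: "(\<lambda>x y. adj y x) = adj"
    using adj_sym by (intro ext) blast
  show ?thesis
    by (simp only: successively_rev sym_eq)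
qed

text \<open>The walk climbs from a to the lowest common ancestor of a and b and descends to b.\<close>

lemma walk_between_same_depth:
  assumes a: "a \<in> T" and b: "b \<in> T" and "a \<noteq> b" and same: "depth a = depth b"
  obtains cs where "hd cs = a" "last cs = b" "3 \<le> length cs" "distinct cs" "set cs \<subseteq> T"
    "successively adj cs" "\<forall>x\<in>set cs. depth x \<le> depth a"
proof -
  define meet where "meet k \<longleftrightarrow> (parent ^^ k) a = (parent ^^ k) b" for k
  have "meet (depth a)"
    using ancestor_depth_0[OF a] ancestor_depth_0[OF b] same by (simp add: meet_def)
  define K where "K = (LEAST k. meet k)"
  have "meet K" and K_le: "K \<le> depth a"
    using \<open>meet (depth a)\<close> unfolding K_def by (auto intro: LeastI Least_le)
  have below_K: "\<not> meet i" if "i < K" for i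
    using that unfolding K_def by (rule not_less_Least)
  obtain K' where K': "K = Suc K'"
    using \<open>meet K\<close> \<open>a \<noteq> b\<close> by (cases K) (auto simp: meet_def)
  have walk_a: "successively adj (ancestor_walk a K)" "distinct (ancestor_walk a K)"
    "set (ancestor_walk a K) = {(parent ^^ i) a | i. i \<le> K}"
    using successively_ancestor_walk[OF a K_le] distinct_ancestor_walk[OF a K_le]
      set_ancestor_walk[OF a K_le] by auto
  have walk_b: "successively adj (ancestor_walk b K')" "distinct (ancestor_walk b K')"
    "set (ancestor_walk b K') = {(parent ^^ i) b | i. i \<le> K'}"
    using successively_ancestor_walk[OF b] distinct_ancestor_walk[OF b] set_ancestor_walk[OF b]
      K_le K' same by auto
  have disjoint: "set (ancestor_walk a K) \<inter> set (ancestor_walk b K') = {}"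
  proof -
    have False if "i \<le> K" "j \<le> K'" "(parent ^^ i) a = (parent ^^ j) b" for i j
    proof -
      have "depth a - i = depth b - j"
        using that depth_ancestor[OF a, of i] depth_ancestor[OF b, of j] K_le K' same by auto
      then have "i = j"
        using that K_le K' same by auto
      then show False
        using that below_K[of i] K' by (auto simp: meet_def)
    qed
    then show ?thesis
      unfolding walk_a(3) walk_b(3) by blast
  qed
  have link: "adj (last (ancestor_walk a K)) (hd (rev (ancestor_walk b K')))"
    using adj_ancestor_Suc[OF b, of K'] \<open>meet K\<close> K' K_le same adj_sym
    by (simp add: meet_def hd_rev del: funpow.simps)
  define cs where "cs = ancestor_walk a K @ rev (ancestor_walk b K')"
  show thesis
  proof (rule that[of cs])
    show "hd cs = a" "last cs = b" "3 \<le> length cs"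
      using K' by (simp_all add: cs_def last_rev)
    show "distinct cs"
      using walk_a(2) walk_b(2) disjoint by (simp add: cs_def)
    show "successively adj cs"
      using walk_a(1) walk_b(1) link unfolding cs_def successively_append_iff by (simp del: successively_rev)
    show "set cs \<subseteq> T" "\<forall>x\<in>set cs. depth x \<le> depth a"
      unfolding cs_def set_append set_rev walk_a(3) walk_b(3)
      using a b K_le K' same ancestor_in_T depth_ancestor by auto
  qed
qed

lemma no_closed_walk:
  assumes "3 \<le> length cs" "distinct cs" "set cs \<subseteq> T" "successively adj cs" "adj (last cs) (hd cs)"
  shows False
proof -
  have "\<forall>i. i + 1 < length cs \<longrightarrow> adj (cs ! i) (cs ! (i + 1))"
    using assms(4) by (simp add: successively_conv_nth)
  then show False
    using acyclic assms(1-3,5) unfolding acyclic_on_def by blast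
qed

text \<open>Any other edge would close a cycle with a walk between two vertices of equal depth.\<close>

lemma adj_parent_cases:
  assumes u: "u \<in> T" and v: "v \<in> T" and "adj u v"
  shows "(v \<noteq> root \<and> u = parent v) \<or> (u \<noteq> root \<and> v = parent u)"
proof -
  have parent_if_deeper: "v \<noteq> root \<and> u = parent v"
    if u: "u \<in> T" and v: "v \<in> T" and "adj u v" and deeper: "depth v = Suc (depth u)" for u v
  proof (rule ccontr)
    assume "\<not> (v \<noteq> root \<and> u = parent v)"
    moreover have "v \<noteq> root"
      using deeper by auto
    ultimately have "parent v \<noteq> u" by blast
    moreover have p: "parent v \<in> T" "adj (parent v) v" "depth (parent v) = depth u"
      using parent_in_T[OF v \<open>v \<noteq> root\<close>] adj_parent[OF v \<open>v \<noteq> root\<close>]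
        depth_parent[OF v \<open>v \<noteq> root\<close>] deeper by auto
    ultimately obtain cs where cs: "hd cs = parent v" "last cs = u" "3 \<le> length cs" "distinct cs"
      "set cs \<subseteq> T" "successively adj cs" "\<forall>x\<in>set cs. depth x \<le> depth (parent v)"
      using walk_between_same_depth[OF p(1) u \<open>parent v \<noteq> u\<close> p(3)] by blast
    have "v \<notin> set cs"
      using cs(7) p(3) deeper by fastforce
    moreover have "cs \<noteq> []"
      using cs(3) by auto
    then have "successively adj (v # cs)" "adj (last (v # cs)) (hd (v # cs))"
      using cs(1,2,6) p(2) \<open>adj u v\<close> adj_sym by (auto simp: successively_Cons)
    ultimately show False
      using no_closed_walk[of "v # cs"] cs(3-5) v by simp
  qed
  have "u \<noteq> v"
    using \<open>adj u v\<close> adj_irrefl by auto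
  have "depth v \<le> Suc (depth u)" "depth u \<le> Suc (depth v)"
    using depth_adj_le u v \<open>adj u v\<close> adj_sym by auto
  moreover have "depth u \<noteq> depth v"
  proof
    assume "depth u = depth v"
    then obtain cs where "hd cs = u" "last cs = v" "3 \<le> length cs" "distinct cs" "set cs \<subseteq> T"
      "successively adj cs"
      using walk_between_same_depth[OF u v \<open>u \<noteq> v\<close>] by blast
    then show False
      using no_closed_walk[of cs] \<open>adj u v\<close> adj_sym by simp
  qed
  ultimately consider "depth v = Suc (depth u)" | "depth u = Suc (depth v)"
    by linarith
  then show ?thesis
  proof cases
    case 1
    then show ?thesis
      using parent_if_deeper[OF u v \<open>adj u v\<close>] by blast
  next
    case 2
    then show ?thesis
      using parent_if_deeper[OF v u] \<open>adj u v\<close> adj_sym by blast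
  qed
qed

text \<open>The guard c \<noteq> root is needed because parent root is an unspecified value.\<close>

definition children :: "'a \<Rightarrow> 'a set" where
  "children v = {c \<in> T. c \<noteq> root \<and> parent c = v}"

lemma neighbours_eq:
  assumes v: "v \<in> T"
  shows "{u \<in> T. adj v u} = (if v = root then {} else {parent v}) \<union> children v"
proof (intro equalityI subsetI)
  fix u assume "u \<in> {u \<in> T. adj v u}"
  then show "u \<in> (if v = root then {} else {parent v}) \<union> children v"
    using adj_parent_cases[OF v] by (auto simp: children_def)
next
  fix u assume "u \<in> (if v = root then {} else {parent v}) \<union> children v"
  then show "u \<in> {u \<in> T. adj v u}"
    using v parent_in_T[of v] adj_parent[of v] adj_parent[of u] adj_sym
    by (auto simp: children_def split: if_splits)
qed

lemma parent_notin_children: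
  assumes v: "v \<in> T" "v \<noteq> root"
  shows "parent v \<notin> children v"
proof
  assume "parent v \<in> children v"
  then have "parent v \<in> T" "parent v \<noteq> root" "parent (parent v) = v"
    by (auto simp: children_def)
  then show False
    using depth_parent[of "parent v"] depth_parent[OF v] by simp
qed

lemma is_leaf_iff_no_children:
  assumes "v \<in> T" "v \<noteq> root"
  shows "is_leaf T adj v \<longleftrightarrow> children v = {}"
proof -
  have "finite (children v)"
    using finite_T by (simp add: children_def)
  then show ?thesis
    using assms neighbours_eq parent_notin_children unfolding is_leaf_def by simp
qed

lemma ancestor_has_child:
  assumes "w \<in> T" "0 < i" "i \<le> depth w"
  shows "(parent ^^ (i - 1)) w \<in> children ((parent ^^ i) w)"
proof -
  have "(parent ^^ (i - 1)) w \<in> T" "depth ((parent ^^ (i - 1)) w) \<noteq> 0"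
    using assms ancestor_in_T depth_ancestor by auto
  moreover have "(parent ^^ i) w = parent ((parent ^^ (i - 1)) w)"
    using \<open>0 < i\<close> by (metis Suc_pred' funpow.simps(2) o_apply)
  ultimately show ?thesis
    by (auto simp: children_def)
qed

end

section \<open>Nested intervals\<close>

locale numbered_rooted_tree = rooted_tree +
  fixes num :: "'a \<Rightarrow> nat"
  assumes num_inj: "inj_on num T"
    and num_less: "\<And>v. v \<in> T \<Longrightarrow> num v < card T"
begin

definition base :: real where
  "base = 2 * real (card T) + 2"

text \<open>The slots of
length base^-(d+1) inside the interval of a parent are numbered from 0, and child c occupies
the odd slot 2 * num c + 1, so the intervals of siblings are separated by a gap.\<close>

fun offset :: "nat \<Rightarrow> 'a \<Rightarrow> real" where
  "offset 0 v = 0"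
| "offset (Suc n) v = offset n (parent v) + (2 * real (num v) + 1) / base ^ Suc n"

definition lo :: "'a \<Rightarrow> real" where
  "lo v = offset (depth v) v"

definition hi :: "'a \<Rightarrow> real" where
  "hi v = lo v + 1 / base ^ depth v"

lemma base_pos: "0 < base"
  by (simp add: base_def)

lemma lo_less_hi: "lo v < hi v"
  using base_pos by (simp add: hi_def)

lemma lo_root [simp]: "lo root = 0" and hi_root [simp]: "hi root = 1"
  by (simp_all add: lo_def hi_def)

lemma
  assumes "v \<in> T" "v \<noteq> root"
  shows lo_child: "lo v = lo (parent v) + (2 * real (num v) + 1) / base ^ depth v"
    and hi_child: "hi v = lo (parent v) + (2 * real (num v) + 2) / base ^ depth v"
    and hi_parent: "hi (parent v) = lo (parent v) + base / base ^ depth v"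
proof -
  have d: "depth v = Suc (depth (parent v))"
    using depth_parent[OF assms] by simp
  show lo: "lo v = lo (parent v) + (2 * real (num v) + 1) / base ^ depth v"
    unfolding lo_def d by simp
  show "hi v = lo (parent v) + (2 * real (num v) + 2) / base ^ depth v"
    unfolding hi_def lo by (simp add: add_divide_distrib[symmetric])
  show "hi (parent v) = lo (parent v) + base / base ^ depth v"
    unfolding hi_def d using base_pos by simp
qed

lemma interval_child:
  assumes "v \<in> T" "v \<noteq> root"
  shows "lo (parent v) < lo v \<and> hi v < hi (parent v)"
proof -
  have "2 * real (num v) + 2 < base"
    using num_less[OF assms(1)] by (simp add: base_def)
  then have "(2 * real (num v) + 2) / base ^ depth v < base / base ^ depth v"
    using base_pos by (simp add: divide_strict_right_mono)
  moreover have "0 < (2 * real (num v) + 1) / base ^ depth v"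
    using base_pos by simp
  ultimately show ?thesis
    using lo_child[OF assms] hi_child[OF assms] hi_parent[OF assms] by simp
qed

lemma intervals_siblings_disjoint:
  assumes v: "v \<in> T" "v \<noteq> root" and w: "w \<in> T" "w \<noteq> root"
    and "parent v = parent w" "v \<noteq> w"
  shows "hi v < lo w \<or> hi w < lo v"
proof -
  have "depth v = depth w"
    using depth_parent[OF v] depth_parent[OF w] \<open>parent v = parent w\<close> by simp
  moreover have "num v \<noteq> num w"
    using num_inj v w \<open>v \<noteq> w\<close> by (auto dest: inj_onD)
  then have "real (num v) + 1 \<le> real (num w) \<or> real (num w) + 1 \<le> real (num v)"
    by linarith
  then have "2 * real (num v) + 2 < 2 * real (num w) + 1 \<or> 2 * real (num w) + 2 < 2 * real (num v) + 1"
    by linarith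
  ultimately show ?thesis
    using lo_child[OF v] hi_child[OF v] lo_child[OF w] hi_child[OF w] \<open>parent v = parent w\<close> base_pos
    by (auto simp: divide_strict_right_mono)
qed

lemma interval_ancestor:
  assumes "v \<in> T" "i \<le> depth v"
  shows "lo ((parent ^^ i) v) \<le> lo v \<and> hi v \<le> hi ((parent ^^ i) v)"
  using assms(2)
proof (induction i)
  case (Suc i)
  have "(parent ^^ i) v \<in> T" "depth ((parent ^^ i) v) \<noteq> 0"
    using assms(1) Suc.prems ancestor_in_T depth_ancestor by auto
  then show ?case
    using interval_child[of "(parent ^^ i) v"] Suc by fastforce
qed simp

lemma interval_bounds: "v \<in> T \<Longrightarrow> 0 \<le> lo v \<and> hi v \<le> 1"
  using interval_ancestor[of v "depth v"] ancestor_depth_0 by simp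

lemma intervals_same_depth_disjoint:
  "u \<in> T \<Longrightarrow> w \<in> T \<Longrightarrow> depth u = depth w \<Longrightarrow> u \<noteq> w \<Longrightarrow> hi u < lo w \<or> hi w < lo u"
proof (induction "depth u" arbitrary: u w)
  case 0
  then show ?case
    using depth_eq_0_iff by auto
next
  case (Suc n)
  then have "u \<noteq> root" "w \<noteq> root"
    by auto
  show ?case
  proof (cases "parent u = parent w")
    case True
    then show ?thesis
      using intervals_siblings_disjoint Suc.prems \<open>u \<noteq> root\<close> \<open>w \<noteq> root\<close> by blast
  next
    case False
    then have "hi (parent u) < lo (parent w) \<or> hi (parent w) < lo (parent u)"
      using Suc parent_in_T depth_parent \<open>u \<noteq> root\<close> \<open>w \<noteq> root\<close> by (metis Suc_inject)
    then show ?thesis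
      using interval_child[of u] interval_child[of w] Suc.prems \<open>u \<noteq> root\<close> \<open>w \<noteq> root\<close>
      by linarith
  qed
qed

lemma ancestor_or_intervals_disjoint:
  assumes "u \<in> T" "w \<in> T" "depth u \<le> depth w"
  shows "(parent ^^ (depth w - depth u)) w = u \<or> hi u < lo w \<or> hi w < lo u"
proof -
  let ?a = "(parent ^^ (depth w - depth u)) w"
  have "?a \<in> T" "depth ?a = depth u"
    using assms ancestor_in_T depth_ancestor by auto
  moreover have "lo ?a \<le> lo w" "hi w \<le> hi ?a"
    using interval_ancestor[OF assms(2)] by auto
  ultimately show ?thesis
    using intervals_same_depth_disjoint[of u ?a] assms(1) lo_less_hi[of w] by fastforce
qed

end

section \<open>The layout of a chandelier\<close>

locale chandelier_layout = numbered_rooted_tree +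
  fixes hub :: 'a
  assumes hub_notin_T: "hub \<notin> T"
    and root_not_leaf: "\<not> is_leaf T adj root"
    and adj_hub: "\<And>v. v \<in> T \<Longrightarrow> adj hub v \<longleftrightarrow> is_leaf T adj v"
begin

definition right_limit :: real where
  "right_limit = real (Max (depth ` T)) + 3"

definition right_end :: "'a \<Rightarrow> real" where
  "right_end v = (if is_leaf T adj v then right_limit + 1 else real (depth v) + 3 / 2)"

text \<open>The box of an inner vertex ends between the left sides of the boxes of its children and
of its grandchildren; the box of a leaf reaches past the right side of the box of the hub.\<close>

definition frame_box :: "'a \<Rightarrow> box" where
  "frame_box v = (if v = hub then (-1, right_limit, -2, 2) else (real (depth v), right_end v, lo v, hi v))"

lemma depth_le_right_limit: "v \<in> T \<Longrightarrow> real (depth v) + 3 \<le> right_limit"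
  unfolding right_limit_def using finite_T by simp

lemma right_end_ge: "v \<in> T \<Longrightarrow> real (depth v) + 3 / 2 \<le> right_end v"
  using depth_le_right_limit[of v] by (simp add: right_end_def)

lemma frame_box_hub: "frame_box hub = (-1, right_limit, -2, 2)"
  by (simp add: frame_box_def)

lemma frame_box_tree: "v \<in> T \<Longrightarrow> frame_box v = (real (depth v), right_end v, lo v, hi v)"
  using hub_notin_T by (auto simp: frame_box_def)

lemma valid_frame_box: "v \<in> insert hub T \<Longrightarrow> valid_box (frame_box v)"
  using right_end_ge lo_less_hi depth_le_right_limit root_in_T
  by (fastforce simp: frame_box_hub frame_box_tree)

lemma right_end_inner: "children v \<noteq> {} \<Longrightarrow> right_end v = real (depth v) + 3 / 2"
  using is_leaf_iff_no_children root_not_leaf unfolding right_end_def is_leaf_def by auto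

lemma tree_frames:
  assumes u: "u \<in> T" and w: "w \<in> T" and "u \<noteq> w" and "depth u \<le> depth w"
  shows "adj u w \<and> pierces (frame_box u) (frame_box w)
    \<or> \<not> adj u w \<and> frame (frame_box u) \<inter> frame (frame_box w) = {}"
proof -
  have adj_parent_of: "w \<noteq> root \<and> u = parent w" if "adj u w"
  proof -
    have "\<not> (u \<noteq> root \<and> w = parent u)"
      using depth_parent[OF u] \<open>depth u \<le> depth w\<close> by auto
    then show ?thesis
      using adj_parent_cases[OF u w that] by blast
  qed
  have disjoint_if_regions: "frame (frame_box u) \<inter> frame (frame_box w) = {}"
    if "region (frame_box u) \<inter> region (frame_box w) = {}"
    using that frames_disjoint_if_regions_disjoint valid_frame_box u w by blast
  consider (ancestor) "(parent ^^ (depth w - depth u)) w = u" | (apart) "hi u < lo w \<or> hi w < lo u"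
    using ancestor_or_intervals_disjoint[OF u w \<open>depth u \<le> depth w\<close>] by blast
  then show ?thesis
  proof cases
    case apart
    then have "region (frame_box u) \<inter> region (frame_box w) = {}"
      unfolding frame_box_tree[OF u] frame_box_tree[OF w] by (intro regions_disjoint) auto
    moreover have "\<not> adj u w"
      using adj_parent_of interval_child[OF w] apart lo_less_hi[of u] lo_less_hi[of w] by force
    ultimately show ?thesis
      using disjoint_if_regions by blast
  next
    case ancestor
    then have "depth u < depth w"
      using \<open>u \<noteq> w\<close> \<open>depth u \<le> depth w\<close> by (cases "depth u = depth w") auto
    then have "children u \<noteq> {}"
      using ancestor_has_child[OF w, of "depth w - depth u"] ancestor by auto
    then have box_u: "frame_box u = (real (depth u), real (depth u) + 3 / 2, lo u, hi u)"
      using frame_box_tree[OF u] right_end_inner by simp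
    show ?thesis
    proof (cases "depth w = Suc (depth u)")
      case True
      then have "parent w = u" "w \<noteq> root"
        using ancestor by auto
      then have "adj u w"
        using adj_parent[OF w] by blast
      moreover have "pierces (frame_box u) (frame_box w)"
        unfolding box_u frame_box_tree[OF w]
        using True right_end_ge[OF w] interval_child[OF w] \<open>parent w = u\<close> \<open>w \<noteq> root\<close> lo_less_hi[of w]
        by auto
      ultimately show ?thesis
        by blast
    next
      case False
      then have "region (frame_box u) \<inter> region (frame_box w) = {}"
        using \<open>depth u < depth w\<close> unfolding box_u frame_box_tree[OF w]
        by (intro regions_disjoint) auto
      moreover have "\<not> adj u w"
        using adj_parent_of depth_parent[OF w] False by auto
      ultimately show ?thesis
        using disjoint_if_regions by blast
    qed
  qed
qed

lemma hub_frames: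
  assumes v: "v \<in> T"
  shows "adj hub v \<and> pierces (frame_box hub) (frame_box v)
    \<or> \<not> adj hub v \<and> frame (frame_box hub) \<inter> frame (frame_box v) = {}"
  using adj_hub[OF v] interval_bounds[OF v] lo_less_hi[of v] depth_le_right_limit[OF v]
    frames_disjoint_if_nested[of "-1" "real (depth v)" "real (depth v) + 3 / 2" right_limit "-2" "lo v" "hi v" 2]
  unfolding frame_box_hub frame_box_tree[OF v] right_end_def by auto

lemma inside_tree_region:
  assumes w: "w \<in> insert hub T" and v: "v \<in> T" and inside: "frame (frame_box w) \<subseteq> region (frame_box v)"
  shows "w \<in> T \<and> depth v \<le> depth w \<and> right_end w \<le> right_end v \<and> lo v \<le> lo w \<and> hi w \<le> hi v"
proof -
  have sub: "region (frame_box w) \<subseteq> region (frame_box v)"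
    using region_subset_if_frame_subset valid_frame_box w inside by blast
  have "w \<noteq> hub"
  proof
    assume "w = hub"
    then have "(-1, -2) \<in> region (frame_box v)"
      using sub depth_le_right_limit[OF v] by (auto simp: frame_box_hub)
    then show False
      using interval_bounds[OF v] by (simp add: frame_box_tree[OF v])
  qed
  then have wT: "w \<in> T"
    using w by blast
  have "(real (depth w), lo w) \<in> region (frame_box v)" "(right_end w, hi w) \<in> region (frame_box v)"
    using sub right_end_ge[OF wT] lo_less_hi[of w] by (auto simp: frame_box_tree[OF wT])
  then show ?thesis
    using wT by (simp add: frame_box_tree[OF v])
qed

lemma not_inside_parent_child:
  assumes c: "c \<in> T" "c \<noteq> root" and w: "w \<in> insert hub T"
  shows "\<not> frame (frame_box w) \<subseteq> region (frame_box (parent c)) \<inter> region (frame_box c)"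
proof
  assume "frame (frame_box w) \<subseteq> region (frame_box (parent c)) \<inter> region (frame_box c)"
  then have "w \<in> T" "right_end w \<le> right_end (parent c)" "depth c \<le> depth w"
    using inside_tree_region[OF w] parent_in_T[OF c] c(1) by blast+
  moreover have "right_end (parent c) = real (depth c) + 1 / 2"
    using right_end_inner[of "parent c"] depth_parent[OF c] c by (force simp: children_def)
  ultimately show False
    using right_end_ge[of w] by auto
qed

lemma not_inside_hub_leaf:
  assumes l: "l \<in> T" "is_leaf T adj l" and w: "w \<in> insert hub T"
  shows "\<not> frame (frame_box w) \<subseteq> region (frame_box hub) \<inter> region (frame_box l)"
proof
  assume inside: "frame (frame_box w) \<subseteq> region (frame_box hub) \<inter> region (frame_box l)"
  then have wT: "w \<in> T" and "depth l \<le> depth w" "lo l \<le> lo w" "hi w \<le> hi l"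
    using inside_tree_region[OF w l(1)] by blast+
  have "(right_end w, hi w) \<in> region (frame_box hub)"
    using inside right_end_ge[OF wT] lo_less_hi[of w] unfolding frame_box_tree[OF wT] frame_def by auto
  then have "\<not> is_leaf T adj w"
    by (auto simp: frame_box_hub right_end_def)
  consider "(parent ^^ (depth w - depth l)) w = l" | "hi l < lo w \<or> hi w < lo l"
    using ancestor_or_intervals_disjoint[OF l(1) wT \<open>depth l \<le> depth w\<close>] by blast
  then show False
  proof cases
    case 1
    then have "depth l \<noteq> depth w"
      using l(2) \<open>\<not> is_leaf T adj w\<close> by auto
    then have "children l \<noteq> {}"
      using ancestor_has_child[OF wT, of "depth w - depth l"] 1 \<open>depth l \<le> depth w\<close> by auto
    then show False
      using is_leaf_iff_no_children root_not_leaf l by blast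
  next
    case 2
    then show False
      using \<open>lo l \<le> lo w\<close> \<open>hi w \<le> hi l\<close> lo_less_hi[of w] by linarith
  qed
qed

lemma frames_of_pair:
  assumes "u \<in> insert hub T" "v \<in> insert hub T" "u \<noteq> v"
  shows "adj u v \<and> (pierces (frame_box u) (frame_box v) \<or> pierces (frame_box v) (frame_box u))
    \<or> \<not> adj u v \<and> frame (frame_box u) \<inter> frame (frame_box v) = {}"
proof -
  consider "u = hub" "v \<in> T" | "v = hub" "u \<in> T" | "u \<in> T" "v \<in> T" "depth u \<le> depth v"
    | "u \<in> T" "v \<in> T" "depth v \<le> depth u"
    using assms by fastforce
  then show ?thesis
  proof cases
    case 1
    then show ?thesis
      using hub_frames[of v] by blast
  next
    case 2
    then show ?thesis
      using hub_frames[of u] adj_sym[of u v] adj_sym[of v u] by blast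
  next
    case 3
    then show ?thesis
      using tree_frames[of u v] assms(3) by blast
  next
    case 4
    then show ?thesis
      using tree_frames[of v u] assms(3) adj_sym[of u v] adj_sym[of v u] by blast
  qed
qed

lemma not_inside_adjacent:
  assumes u: "u \<in> insert hub T" and v: "v \<in> insert hub T" and w: "w \<in> insert hub T"
    and "u \<noteq> v" "adj u v"
  shows "\<not> frame (frame_box w) \<subseteq> region (frame_box u) \<inter> region (frame_box v)"
proof -
  consider "u = hub" "v \<in> T" | "v = hub" "u \<in> T" | "u \<in> T" "v \<in> T"
    using u v \<open>u \<noteq> v\<close> by blast
  then show ?thesis
  proof cases
    case 1
    then show ?thesis
      using not_inside_hub_leaf[OF _ _ w] adj_hub \<open>adj u v\<close> by blast
  next
    case 2
    then show ?thesis
      using not_inside_hub_leaf[OF _ _ w] adj_hub adj_sym \<open>adj u v\<close> by (metis Int_commute)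
  next
    case 3
    then show ?thesis
      using adj_parent_cases[OF _ _ \<open>adj u v\<close>] not_inside_parent_child[OF _ _ w] by (metis Int_commute)
  qed
qed

theorem restricted_frame_rep_frame_box: "restricted_frame_rep (insert hub T) adj frame_box"
  using valid_frame_box frames_of_pair not_inside_adjacent by (intro restricted_frame_repI) blast+

end

section \<open>Chandeliers over a single edge\<close>

lemma tree_with_only_leaves:
  assumes tree: "is_tree T adj" and sym: "\<And>u v. adj u v \<Longrightarrow> adj v u" and irrefl: "\<And>v. \<not> adj v v"
    and leaves: "\<forall>v\<in>T. is_leaf T adj v" and a: "a \<in> T"
  obtains b where "T = {a, b}" "b \<noteq> a" "adj a b"
proof -
  obtain b where b: "{u \<in> T. adj a u} = {b}"
    using leaves a unfolding is_leaf_def by (auto simp: card_1_singleton_iff)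
  then have "b \<in> T" "adj a b" "b \<noteq> a"
    using irrefl by auto
  then have "a \<in> {u \<in> T. adj b u}"
    using a sym by auto
  moreover obtain c where "{u \<in> T. adj b u} = {c}"
    using leaves \<open>b \<in> T\<close> unfolding is_leaf_def by (auto simp: card_1_singleton_iff)
  ultimately have a': "{u \<in> T. adj b u} = {a}"
    by auto
  have closed: "y \<in> {a, b}" if "(a, y) \<in> {(x, y). x \<in> T \<and> y \<in> T \<and> adj x y}\<^sup>*" for y
    using that
  proof (induction rule: rtrancl_induct)
    case (step y z)
    then show ?case
      using b a' by blast
  qed simp
  have "T \<subseteq> {a, b}"
    using tree a closed unfolding is_tree_def connected_on_def by blast
  then show thesis
    using that a \<open>b \<in> T\<close> \<open>b \<noteq> a\<close> \<open>adj a b\<close> by blast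
qed

lemma triangle_restricted_frame_graph:
  assumes "distinct [a, b, c]"
    and adj: "\<And>u v. u \<in> {a, b, c} \<Longrightarrow> v \<in> {a, b, c} \<Longrightarrow> u \<noteq> v \<Longrightarrow> adj u v"
  shows "restricted_frame_graph {a, b, c} adj"
proof -
  define F :: "'a \<Rightarrow> box" where
    "F x = (if x = a then (-1, 3/2, -3, 3) else if x = b then (0, 2, -2, 2) else (1, 3, -1, 1))" for x
  have F: "F a = (-1, 3/2, -3, 3)" "F b = (0, 2, -2, 2)" "F c = (1, 3, -1, 1)"
    using assms(1) by (auto simp: F_def)
  have nested_eq: "w = u" if "w \<in> {a, b, c}" "u \<in> {a, b, c}" "frame (F w) \<subseteq> region (F u)" for w u
    using region_subset_if_frame_subset[of "F w" "F u"] that F assms(1) by (auto simp: times_subset_iff)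
  show ?thesis
    unfolding restricted_frame_graph_def
  proof (intro exI restricted_frame_repI)
    show "pierces (F u) (F v) \<or> pierces (F v) (F u)" if "u \<in> {a, b, c}" "v \<in> {a, b, c}" "u \<noteq> v" for u v
      using that F by auto
    show "\<not> frame (F w) \<subseteq> region (F u) \<inter> region (F v)"
      if "u \<in> {a, b, c}" "v \<in> {a, b, c}" "w \<in> {a, b, c}" "u \<noteq> v" for u v w
      using that nested_eq by blast
  qed (use F adj in auto)
qed

theorem lemma3p1:
  fixes V :: "'a set" and adj :: "'a \<Rightarrow> 'a \<Rightarrow> bool"
  assumes "chandelier V adj"
  shows "restricted_frame_graph V adj"
proof -
  obtain T hub where hub: "hub \<notin> T" "V = insert hub T" and tree: "is_tree T adj"
    and adj_hub: "\<forall>v\<in>T. adj hub v \<longleftrightarrow> is_leaf T adj v"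
    using assms unfolding chandelier_def by blast
  have sym: "\<And>u v. adj u v \<Longrightarrow> adj v u" and irrefl: "\<And>v. \<not> adj v v"
    using assms unfolding chandelier_def simple_graph_def by blast+
  show ?thesis
  proof (cases "\<forall>v\<in>T. is_leaf T adj v")
    case False
    then obtain root where root: "root \<in> T" "\<not> is_leaf T adj root"
      by blast
    obtain num where "bij_betw num T {0..<card T}"
      using ex_bij_betw_finite_nat tree unfolding is_tree_def by blast
    then interpret chandelier_layout T adj root num hub
      using tree sym irrefl hub(1) adj_hub root
      by unfold_locales (auto simp: is_tree_def bij_betw_def)
    show ?thesis
      unfolding restricted_frame_graph_def hub(2) using restricted_frame_rep_frame_box by blast
  next
    case True
    obtain a where "a \<in> T"
      using tree by (auto simp: is_tree_def)
    then obtain b where "T = {a, b}" "b \<noteq> a" "adj a b"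
      using tree_with_only_leaves[OF tree sym irrefl True] by blast
    then show ?thesis
      using triangle_restricted_frame_graph[of hub a b adj] hub adj_hub True sym by auto
  qed
qed

end
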